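(* Let $X$ be a strongly-stable sequence with respect to a full BST $T$, and assume $X$ is a whole multiple of its atomic sequence. Then $$\hat c(GF,X,T)=\sum_{x\text{ a leaf of }T}\frac{d(x)+1}{2^{d(x)}}.$$
   Context: Binary search tree model. Keys are $\{1,\dots,n\}$. A query sequence is $X=[x_1,\dots,x_m]$, and $T_0$ is an initial BST. An algorithm $A$ serves $x_1,\dots,x_m$ in order. Before serving $x_t$ it holds a BST $T_{t-1}$; it searches $x_t$ from the root and may then restructure the tree by rotations into $T_t$. Let $P_t$ be the set of nodes on the root-to-$x_t$ path of $T_{t-1}$, and let $U_t$ be the node set of the minimal subtree containing all edges rotated in transforming $T_{t-1}$ into $T_t$. The cost at time $t$ is $|P_t\cup U_t|$. $\mathrm{cost}(A,X,T_0)$ is the sum of these costs, and $\hat c(A,X,T_0)=\mathrm{cost}(A,X,T_0)/m$. $d(x)$ is the number of edges from the root to $x$. Greedy Future ($GF$). After finding $x_t$ in $T_{t-1}$, let $v_1<\dots<v_k$ be the keys on the root-to-$x_t$ path, set $v_0=-\infty$ and $v_{k+1}=+\infty$, and let $R_0,\dots,R_k$ be the subtrees hanging off this path. For each $i$, $\tau(v_i)$ is the smallest $s>t$ with $x_s\in(v_{i-1},v_{i+1})$, or $+\infty$ if there is none. $GF$ rearranges $v_1,\dots,v_k$ as a treap: a BST in key order and a heap in $\tau$, with the smallest $\tau$ at the top. Ties in $\tau$ are broken in favor of the node of smaller depth in $T_{t-1}$. It then reattaches $R_0,\dots,R_k$ unchanged at their unique positions, giving $T_t$. Stable sequences. Let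 $T$ be a full binary search tree (every inner node has exactly two children), and let $X$ be a query sequence consisting only of keys stored at leaves of $T$. For an inner node $v$, let $X_v$ be the subsequence of $X$ consisting of the queries to keys in the subtree of $v$. The node $v$ is strongly-stable if consecutive queries of $X_v$ alternate between the left and right subtrees of $v$. $X$ (and $T$) is strongly-stable if every inner node of $T$ is strongly-stable. Given $T$ and the subtree each node's alternation starts with, the sequence is determined up to its length. Its atomic sequence is the shortest such sequence all of whose repetitions are again such sequences. $X$ is a whole multiple of its atomic sequence if it is a concatenation of copies of it. *)

theory Defs
  imports Complex_Main "HOL-Library.Tree" "HOL-Library.Extended_Nat" "HOL-Library.Product_Lexorder"
begin

fun search_path :: "nat tree \<Rightarrow> nat \<Rightarrow> nat list" where
  "search_path Leaf x = []"
| "search_path (Node l a r) x =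
     (if x < a then a # search_path l x
      else if a < x then a # search_path r x
      else [a])"

definition depth :: "nat tree \<Rightarrow> nat \<Rightarrow> nat" where
  "depth T x = length (search_path T x) - 1"

fun hanging :: "nat tree \<Rightarrow> nat \<Rightarrow> nat tree list" where
  "hanging Leaf x = [Leaf]"
| "hanging (Node l a r) x =
     (if x < a then hanging l x @ [r]
      else if a < x then l # hanging r x
      else [l, r])"

definition next_time :: "nat list \<Rightarrow> nat \<Rightarrow> (nat \<Rightarrow> bool) \<Rightarrow> enat" where
  "next_time X t P =
     (if \<exists>s. t < s \<and> s < length X \<and> P (X ! s)
      then enat (LEAST s. t < s \<and> s < length X \<and> P (X ! s))
      else \<infinity>)"

text \<open>Treap construction: vs is the sorted list of path keys, Rs the list of the
  length vs + 1 hanging subtrees in key order; the key with smallest priority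
  becomes the root.\<close>
function gf_build :: "(nat \<Rightarrow> enat \<times> nat) \<Rightarrow> nat list \<Rightarrow> nat tree list \<Rightarrow> nat tree" where
  "gf_build prio vs Rs =
     (if vs = [] then (case Rs of [] \<Rightarrow> Leaf | R # _ \<Rightarrow> R)
      else
        (let v = arg_min_list prio vs;
             L = filter (\<lambda>u. u < v) vs;
             G = filter (\<lambda>u. v < u) vs;
             j = length L
         in Node (gf_build prio L (take (j + 1) Rs)) v (gf_build prio G (drop (j + 1) Rs))))"
  by pat_completeness auto
termination
  by (relation "measure (\<lambda>(_, vs, _). length vs)")
     (auto intro!: length_filter_less dest: arg_min_list_in[where f = "_ :: nat \<Rightarrow> enat \<times> nat"])

text \<open>The priority of a path key v
  is (tau(v), depth of v in T), compared lexicographically: smallest tau on top,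
  ties broken in favour of smaller depth.  tau(v) is the next time after t of a query
  in the open interval between the predecessor and successor of v among the path keys.\<close>
definition gf_step :: "nat list \<Rightarrow> nat \<Rightarrow> nat tree \<Rightarrow> nat tree" where
  "gf_step X t T =
     (let x = X ! t;
          p = search_path T x;
          tau = (\<lambda>v. next_time X t
                   (\<lambda>y. (\<forall>u\<in>set p. u < v \<longrightarrow> u < y) \<and> (\<forall>u\<in>set p. v < u \<longrightarrow> y < u)));
          prio = (\<lambda>v. (tau v, depth T v))
      in gf_build prio (sort p) (hanging T x))"

fun gf_tree :: "nat list \<Rightarrow> nat tree \<Rightarrow> nat \<Rightarrow> nat tree" where
  "gf_tree X T0 0 = T0"
| "gf_tree X T0 (Suc t) = gf_step X t (gf_tree X T0 t)"

text \<open>Cost of GF: GF only rearranges the nodes of the search path P_t, so U_t is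
  contained in P_t and the cost at time t is |P_t| = d(x_t) + 1 in T_(t-1).\<close>
definition gf_cost :: "nat list \<Rightarrow> nat tree \<Rightarrow> nat" where
  "gf_cost X T0 = (\<Sum>t<length X. length (search_path (gf_tree X T0 t) (X ! t)))"

definition gf_avg_cost :: "nat list \<Rightarrow> nat tree \<Rightarrow> real" where
  "gf_avg_cost X T0 = real (gf_cost X T0) / real (length X)"

definition full_tree :: "'a tree \<Rightarrow> bool" where
  "full_tree T \<longleftrightarrow> (\<forall>l a r. Node l a r \<in> subtrees T \<longrightarrow> (l = Leaf \<longleftrightarrow> r = Leaf))"

definition leaf_keys :: "'a tree \<Rightarrow> 'a set" where
  "leaf_keys T = {a. Node Leaf a Leaf \<in> subtrees T}"

definition sub_seq :: "'a tree \<Rightarrow> 'a list \<Rightarrow> 'a list" where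
  "sub_seq v X = filter (\<lambda>y. y \<in> set_tree v) X"

definition strongly_stable_node :: "'a tree \<Rightarrow> 'a tree \<Rightarrow> 'a list \<Rightarrow> bool" where
  "strongly_stable_node l r Xv \<longleftrightarrow>
     (\<forall>i. i + 1 < length Xv \<longrightarrow> (Xv ! i \<in> set_tree l \<longleftrightarrow> Xv ! (i + 1) \<in> set_tree r))"

definition strongly_stable :: "'a tree \<Rightarrow> 'a list \<Rightarrow> bool" where
  "strongly_stable T X \<longleftrightarrow>
     full_tree T \<and> set X \<subseteq> leaf_keys T \<and>
     (\<forall>l a r. Node l a r \<in> subtrees T \<and> l \<noteq> Leaf \<and> r \<noteq> Leaf \<longrightarrow>
        strongly_stable_node l r (sub_seq (Node l a r) X))"

text \<open>Start data s: s a = True means the alternation at the inner node with key a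
  starts with its left subtree.\<close>
definition conforms :: "'a tree \<Rightarrow> ('a \<Rightarrow> bool) \<Rightarrow> 'a list \<Rightarrow> bool" where
  "conforms T s X \<longleftrightarrow> strongly_stable T X \<and>
     (\<forall>l a r. Node l a r \<in> subtrees T \<and> l \<noteq> Leaf \<and> r \<noteq> Leaf \<and> sub_seq (Node l a r) X \<noteq> []
        \<longrightarrow> (hd (sub_seq (Node l a r) X) \<in> set_tree l \<longleftrightarrow> s a))"

definition atomic_seq :: "'a tree \<Rightarrow> ('a \<Rightarrow> bool) \<Rightarrow> 'a list \<Rightarrow> bool" where
  "atomic_seq T s A \<longleftrightarrow> A \<noteq> [] \<and>
     (\<forall>k\<ge>1. conforms T s (concat (replicate k A))) \<and>
     (\<forall>B. B \<noteq> [] \<and> (\<forall>k\<ge>1. conforms T s (concat (replicate k B))) \<longrightarrow> length A \<le> length B)"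

end

theory Submission
  imports Defs
begin

text \<open>On a strongly stable sequence GF never changes the tree.  Let the current query x lie in
  the child c of a node a on its search path, and let d be the other child.  The window of a
  contains d, whereas the window of every path node u below a meets the queried leaves only
  inside c.  Since the queries to the subtree of a alternate between c and d, d is queried
  before c is queried again, so tau(a) \<le> tau(u); with the depth tie-break the search path is
  already the treap GF builds.  Serving x therefore costs d(x) + 1 in the fixed tree.

  A whole multiple X of the atomic sequence can be doubled without losing strong stability,
  and alternation around the cycle X @ X forces every inner node to split the queries of X
  evenly between its two subtrees.  Hence each leaf x receives the fraction 2^-d(x) of the
  queries, which yields the average cost.\<close>

declare gf_build.simps [simp del]

lemma bst_subtrees: "bst t \<Longrightarrow> s \<in> subtrees t \<Longrightarrow> bst s"
  by (induction t) auto

lemma set_tree_subtrees: "s \<in> subtrees t \<Longrightarrow> set_tree s \<subseteq> set_tree t"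
  by (induction t) auto

lemma subtrees_trans: "s \<in> subtrees t \<Longrightarrow> u \<in> subtrees s \<Longrightarrow> u \<in> subtrees t"
  by (induction t) auto

lemma child_in_subtrees:
  assumes "Node l a r \<in> subtrees t" "c \<in> {l, r}"
  shows "c \<in> subtrees t"
proof -
  have "c \<in> subtrees c" by (cases c) auto
  with assms(2) have "c \<in> subtrees (Node l a r)" by auto
  with assms(1) show ?thesis by (rule subtrees_trans)
qed

lemma bst_children_disjoint: "bst (Node l a r) \<Longrightarrow> set_tree l \<inter> set_tree r = {}"
  by (auto dest: order.strict_trans)

lemma bst_child_side:
  assumes "bst (Node l a r)" "c \<in> {l, r}" "y \<in> set_tree c" "z \<in> set_tree c"
  shows "(y < a \<longleftrightarrow> z < a) \<and> (a < y \<longleftrightarrow> a < z)"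
  using assms by auto

lemma bst_subtrees_key_unique:
  "bst t \<Longrightarrow> Node l a r \<in> subtrees t \<Longrightarrow> Node l' a r' \<in> subtrees t \<Longrightarrow> l = l' \<and> r = r'"
proof (induction t)
  case (Node L b R)
  then have "a \<in> set_tree L \<Longrightarrow> a \<notin> set_tree R" "a \<noteq> b \<longrightarrow> a \<in> set_tree L \<or> a \<in> set_tree R"
    using in_set_tree_if by fastforce+
  with Node show ?case
    by simp (metis in_set_tree_if less_asym)
qed simp

lemma leaf_keys_singleton: "leaf_keys (Node Leaf a Leaf) = {a}"
  by (simp add: leaf_keys_def)

lemma leaf_keys_Node:
  "\<not> (l = Leaf \<and> r = Leaf) \<Longrightarrow> leaf_keys (Node l a r) = leaf_keys l \<union> leaf_keys r"
  by (auto simp: leaf_keys_def)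

lemma leaf_keys_subset: "leaf_keys t \<subseteq> set_tree t"
  by (auto simp: leaf_keys_def dest: in_set_tree_if)

lemma leaf_key_not_inner:
  assumes "bst t" "y \<in> leaf_keys t" "Node l a r \<in> subtrees t" "l \<noteq> Leaf"
  shows "y \<noteq> a"
  using assms bst_subtrees_key_unique[OF assms(1,3), of Leaf Leaf] by (auto simp: leaf_keys_def)

lemma search_path_subset: "set (search_path t x) \<subseteq> set_tree t"
  by (induction t) auto

lemma search_path_ne: "x \<in> set_tree t \<Longrightarrow> search_path t x \<noteq> []"
  by (cases t) auto

lemma length_hanging: "length (hanging t x) = Suc (length (search_path t x))"
  by (induction t) auto

lemma search_path_Node_child:
  assumes "bst (Node l a r)" "c \<in> {l, r}" "x \<in> set_tree c"
  shows "search_path (Node l a r) x = a # search_path c x"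
  using assms by auto

lemma search_path_Node_cases:
  obtains "search_path (Node l a r) x = [a]"
  | c where "c \<in> {l, r}" "search_path (Node l a r) x = a # search_path c x"
  by (cases x a rule: linorder_cases) auto

lemma depth_root: "depth (Node l a r) a = 0"
  by (simp add: depth_def)

lemma depth_Node_child:
  assumes "bst (Node l a r)" "c \<in> {l, r}" "x \<in> set_tree c"
  shows "depth (Node l a r) x = Suc (depth c x)"
  using assms search_path_ne[OF assms(3)] by (auto simp: depth_def)

lemma sorted_wrt_depth_search_path:
  "bst t \<Longrightarrow> sorted_wrt (\<lambda>u v. depth t u < depth t v) (search_path t x)"
proof (induction t)
  case (Node l a r)
  show ?case
  proof (cases rule: search_path_Node_cases[of l a r x])
    case (2 c)
    have depth: "depth (Node l a r) u = Suc (depth c u)" if "u \<in> set (search_path c x)" for u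
      using Node.prems 2(1) search_path_subset that by (blast intro: depth_Node_child)
    have "sorted_wrt (\<lambda>u v. depth c u < depth c v) (search_path c x)"
      using Node 2(1) by auto
    then have "sorted_wrt (\<lambda>u v. depth (Node l a r) u < depth (Node l a r) v) (search_path c x)"
      by (rule sorted_wrt_mono_rel[rotated]) (simp add: depth)
    then show ?thesis
      unfolding 2(2) using depth by (simp add: depth_root)
  qed simp
qed simp

lemma sorted_wrt_search_pathI:
  assumes "bst t" "x \<in> set_tree t"
    and "\<And>l a r c u. Node l a r \<in> subtrees t \<Longrightarrow> c \<in> {l, r} \<Longrightarrow> x \<in> set_tree c \<Longrightarrow>
           u \<in> set (search_path c x) \<Longrightarrow> R a u"
  shows "sorted_wrt R (search_path t x)"
  using assms
proof (induction t)
  case (Node l a r)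
  show ?case
  proof (cases "x = a")
    case False
    then obtain c where c: "c \<in> {l, r}" "x \<in> set_tree c" using Node.prems(2) by auto
    have "bst c" using Node.prems(1) c(1) by auto
    moreover have "R a' u"
      if "Node l' a' r' \<in> subtrees c" "c' \<in> {l', r'}" "x \<in> set_tree c'" "u \<in> set (search_path c' x)"
      for l' a' r' c' u
      using Node.prems(3)[OF _ that(2-4)] that(1) c(1) by auto
    ultimately have "sorted_wrt R (search_path c x)"
      using Node.IH c by auto
    moreover have "R a u" if "u \<in> set (search_path c x)" for u
      using Node.prems(3)[OF _ c that] by simp
    moreover have "search_path (Node l a r) x = a # search_path c x"
      using Node.prems(1) c by (rule search_path_Node_child)
    ultimately show ?thesis by simp
  qed simp
qed simp

lemma sorted_wrt_conj: "sorted_wrt P xs \<Longrightarrow> sorted_wrt Q xs \<Longrightarrow> sorted_wrt (\<lambda>x y. P x y \<and> Q x y) xs"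
  by (induction xs) auto

section \<open>Rebuilding the search path as a treap\<close>

lemma arg_min_list_eqI:
  fixes f :: "'a \<Rightarrow> 'b::linorder"
  assumes "a \<in> set xs" "\<And>u. u \<in> set xs \<Longrightarrow> u \<noteq> a \<Longrightarrow> f a < f u"
  shows "arg_min_list f xs = a"
proof -
  have "xs \<noteq> []" using assms(1) by auto
  then have "arg_min_list f xs \<in> set xs" "f (arg_min_list f xs) \<le> f a"
    using arg_min_list_in assms(1) by (auto simp: f_arg_min_list_f)
  with assms(2) show ?thesis by (meson not_less)
qed

lemma gf_build_Nil: "gf_build prio [] (R # Rs) = R"
  by (simp add: gf_build.simps)

lemma gf_build_Node:
  assumes "vs \<noteq> []" "arg_min_list prio vs = v"
  defines "L \<equiv> filter (\<lambda>u. u < v) vs"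
  shows "gf_build prio vs Rs =
    Node (gf_build prio L (take (Suc (length L)) Rs)) v
         (gf_build prio (filter (\<lambda>u. v < u) vs) (drop (Suc (length L)) Rs))"
  using assms by (subst gf_build.simps) (simp add: Let_def)

lemma gf_build_search_path:
  assumes "bst t" "sorted_wrt (\<lambda>u v. prio u < prio v) (search_path t x)"
  shows "gf_build prio (sort (search_path t x)) (hanging t x) = t"
  using assms
proof (induction t)
  case Leaf
  then show ?case by (simp add: gf_build_Nil)
next
  case (Node l a r)
  let ?p = "search_path (Node l a r) x"
  have root: "arg_min_list prio (sort ?p) = a"
    using Node.prems(2) by (intro arg_min_list_eqI) (auto split: if_splits)
  have "sort ?p \<noteq> []" by auto
  note build = gf_build_Node[OF this root]
  consider "x < a" | "a < x" | "x = a" by linarith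
  then show ?case
  proof cases
    case 1
    let ?q = "search_path l x"
    have "\<forall>u\<in>set ?q. u < a" using search_path_subset[of l x] Node.prems(1) by auto
    then have "sort ?p = sort ?q @ [a]" "filter (\<lambda>u. u < a) (sort ?q) = sort ?q"
        "filter (\<lambda>u. a < u) (sort ?q) = []"
      using 1 by (auto simp: sorted_insort_is_snoc less_imp_le filter_empty_conv)
    moreover have "gf_build prio (sort ?q) (hanging l x) = l"
      using Node 1 by simp
    ultimately show ?thesis
      unfolding build using 1 length_hanging[of l x] by (simp add: gf_build_Nil)
  next
    case 2
    let ?q = "search_path r x"
    have "\<forall>u\<in>set ?q. a < u" using search_path_subset[of r x] Node.prems(1) by auto
    then have "sort ?p = a # sort ?q" "filter (\<lambda>u. a < u) (sort ?q) = sort ?q"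
        "filter (\<lambda>u. u < a) (sort ?q) = []"
      using 2 by (auto simp: insort_is_Cons less_imp_le filter_empty_conv)
    moreover have "gf_build prio (sort ?q) (hanging r x) = r"
      using Node 2 by simp
    ultimately show ?thesis
      unfolding build using 2 by (simp add: gf_build_Nil)
  next
    case 3
    then show ?thesis unfolding build by (simp add: gf_build_Nil)
  qed
qed

text \<open>y lies strictly between the neighbours of v among the keys of p; for the search path p of
  the current query this is the interval that defines tau(v).\<close>
definition in_window :: "nat list \<Rightarrow> nat \<Rightarrow> nat \<Rightarrow> bool" where
  "in_window p v y \<longleftrightarrow> (\<forall>u\<in>set p. u < v \<longrightarrow> u < y) \<and> (\<forall>u\<in>set p. v < u \<longrightarrow> y < u)"

lemma in_window_Cons:
  "in_window (b # p) v y \<longleftrightarrow> in_window p v y \<and> (b < v \<longrightarrow> b < y) \<and> (v < b \<longrightarrow> y < b)"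
  by (auto simp: in_window_def)

lemma in_window_opposite_child:
  assumes "bst T" "Node l a r \<in> subtrees T"
    and "x \<in> set_tree l \<and> z \<in> set_tree r \<or> x \<in> set_tree r \<and> z \<in> set_tree l"
  shows "in_window (search_path T x) a z"
  using assms
proof (induction T)
  case (Node L b R)
  show ?case
  proof (cases "Node l a r = Node L b R")
    case True
    then show ?thesis
      using Node.prems search_path_subset[of L x] search_path_subset[of R x]
      by (fastforce simp: in_window_def)
  next
    case False
    then obtain C where C: "C \<in> {L, R}" "Node l a r \<in> subtrees C"
      using Node.prems(2) by auto
    then have "x \<in> set_tree C" "z \<in> set_tree C" "a \<in> set_tree C"
      using Node.prems(3) set_tree_subtrees[of "Node l a r" C] by auto
    moreover have "in_window (search_path C x) a z"
      using Node C by auto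
    ultimately show ?thesis
      using Node.prems(1) C(1) search_path_Node_child bst_child_side
      by (metis in_window_Cons)
  qed
qed simp

lemma in_window_subset_subtree:
  assumes "bst T" "S \<in> subtrees T" "x \<in> set_tree S" "u \<in> set (search_path S x)"
    and "y \<in> set_tree T" "in_window (search_path T x) u y"
  shows "y \<in> set_tree S"
  using assms
proof (induction T)
  case (Node L b R)
  show ?case
  proof (cases "S = Node L b R")
    case False
    then obtain C where C: "C \<in> {L, R}" "S \<in> subtrees C"
      using Node.prems(2) by auto
    then have "x \<in> set_tree C" "u \<in> set_tree C"
      using Node.prems(3,4) search_path_subset set_tree_subtrees by blast+
    then have path: "search_path (Node L b R) x = b # search_path C x"
      and side: "(u < b \<longleftrightarrow> y < b) \<and> (b < u \<longleftrightarrow> b < y)"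
      using Node.prems(1,6) C(1) search_path_Node_child[of L b R C x]
      by (auto simp: in_window_Cons)
    have "y \<in> set_tree C"
      using Node.prems(1,5) C(1) \<open>u \<in> set_tree C\<close> side by auto
    then show ?thesis
      using Node C path by (auto simp: in_window_Cons)
  qed (use Node.prems in simp)
qed simp

lemma next_time_le: "t < s \<Longrightarrow> s < length X \<Longrightarrow> P (X ! s) \<Longrightarrow> next_time X t P \<le> enat s"
  unfolding next_time_def by (auto intro: Least_le)

lemma next_time_enatD:
  assumes "next_time X t P = enat s"
  shows "t < s" "s < length X" "P (X ! s)" "\<And>j. t < j \<Longrightarrow> j < s \<Longrightarrow> \<not> P (X ! j)"
proof -
  have ex: "\<exists>s. t < s \<and> s < length X \<and> P (X ! s)" and s: "s = (LEAST s. t < s \<and> s < length X \<and> P (X ! s))"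
    using assms unfolding next_time_def by (auto split: if_splits)
  show "t < s" "s < length X" "P (X ! s)" using LeastI_ex[OF ex] unfolding s by auto
  show "\<not> P (X ! j)" if "t < j" "j < s" for j
    using not_less_Least[of j "\<lambda>s. t < s \<and> s < length X \<and> P (X ! s)"] that \<open>s < length X\<close>
    unfolding s by auto
qed

lemma next_time_mono:
  assumes "\<And>s. t < s \<Longrightarrow> s < length X \<Longrightarrow> P (X ! s) \<Longrightarrow> Q (X ! s)"
  shows "next_time X t Q \<le> next_time X t P"
proof (cases "next_time X t P")
  case (enat s)
  with next_time_enatD[OF this] assms show ?thesis by (simp add: next_time_le)
qed simp

lemma successively_filter_nth:
  assumes "successively R (filter P xs)" "t < s" "s < length xs" "P (xs ! t)" "P (xs ! s)"
    and "\<And>j. t < j \<Longrightarrow> j < s \<Longrightarrow> \<not> P (xs ! j)"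
  shows "R (xs ! t) (xs ! s)"
proof -
  let ?mid = "drop (Suc t) (take s xs)"
  have "take s xs = take t xs @ xs ! t # ?mid"
    using assms(2,3) append_take_drop_id[of "Suc t" "take s xs"]
    by (simp add: take_Suc_conv_app_nth)
  then have "xs = take t xs @ xs ! t # ?mid @ xs ! s # drop (Suc s) xs"
    using id_take_nth_drop[OF assms(3)] by (metis append_Cons append_assoc)
  then have "filter P xs = filter P (take t xs @ xs ! t # ?mid @ xs ! s # drop (Suc s) xs)"
    by (rule arg_cong)
  moreover have "filter P ?mid = []"
  proof -
    have "\<not> P (?mid ! i)" if "i < length ?mid" for i
      using that assms(3) assms(6)[of "Suc t + i"] by simp
    then show ?thesis by (auto simp: filter_empty_conv in_set_conv_nth)
  qed
  ultimately have "filter P xs = filter P (take t xs) @ xs ! t # xs ! s # filter P (drop (Suc s) xs)"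
    using assms(4,5) by simp
  with assms(1) show ?thesis by (simp add: successively_append_iff)
qed

lemma next_time_alternation:
  assumes "successively (\<lambda>y z. \<not> (C y \<and> C z)) (filter P X)"
    and "\<And>y. C y \<Longrightarrow> P y" "\<And>y. y \<in> set X \<Longrightarrow> P y \<Longrightarrow> C y \<or> D y"
    and "C (X ! t)" "next_time X t C \<noteq> \<infinity>"
  shows "next_time X t D < next_time X t C"
proof -
  obtain s where s: "next_time X t C = enat s" using assms(5) by auto
  note sD = next_time_enatD[OF s]
  have "next_time X t P \<le> enat s" using sD assms(2) by (simp add: next_time_le)
  then obtain j where j: "next_time X t P = enat j" "j \<le> s" by (cases "next_time X t P") auto
  note jD = next_time_enatD[OF j(1)]
  have "\<not> C (X ! j)"
    using successively_filter_nth[OF assms(1) jD(1,2) assms(2)[OF assms(4)] jD(3,4)] assms(4) by blast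
  then have "D (X ! j)"
    using assms(3)[OF nth_mem[OF jD(2)] jD(3)] by blast
  have "j < s"
    using \<open>\<not> C (X ! j)\<close> sD(3) j(2) le_neq_implies_less by blast
  have "next_time X t D \<le> enat j" using jD(1,2) \<open>D (X ! j)\<close> by (rule next_time_le)
  with \<open>j < s\<close> s show ?thesis by (simp add: le_less_trans)
qed

section \<open>GF leaves a strongly stable tree unchanged\<close>

lemma sub_seq_in_children:
  assumes "bst T" "set X \<subseteq> leaf_keys T" "Node l a r \<in> subtrees T" "l \<noteq> Leaf"
    and "y \<in> set (sub_seq (Node l a r) X)"
  shows "y \<in> set_tree r \<longleftrightarrow> y \<notin> set_tree l"
proof -
  have "y \<noteq> a" using assms leaf_key_not_inner[OF assms(1) _ assms(3,4)] by (auto simp: sub_seq_def)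
  moreover have "bst (Node l a r)" using assms(1,3) by (rule bst_subtrees)
  ultimately show ?thesis using assms(5) less_asym by (fastforce simp: sub_seq_def)
qed

lemma strongly_stable_alternates:
  assumes "bst T" "strongly_stable T X" "Node l a r \<in> subtrees T" "l \<noteq> Leaf"
  shows "distinct_adj (map (\<lambda>y. y \<in> set_tree l) (sub_seq (Node l a r) X))"
proof -
  have "r \<noteq> Leaf" using assms(2-4) by (auto simp: strongly_stable_def full_tree_def)
  with assms have alt: "successively (\<lambda>y z. y \<in> set_tree l \<longleftrightarrow> z \<in> set_tree r) (sub_seq (Node l a r) X)"
    by (auto simp: strongly_stable_def strongly_stable_node_def successively_conv_nth)
  have "set X \<subseteq> leaf_keys T" using assms(2) by (simp add: strongly_stable_def)
  note children = sub_seq_in_children[OF assms(1) this assms(3,4)]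
  show ?thesis
    unfolding distinct_adj_def successively_map
    by (rule successively_mono[OF alt]) (use children in blast)
qed

lemma next_time_other_child_less:
  assumes "bst T" "strongly_stable T X" "Node l a r \<in> subtrees T"
    and "c = l \<and> d = r \<or> c = r \<and> d = l" "X ! t \<in> set_tree c"
    and "next_time X t (\<lambda>y. y \<in> set_tree c) \<noteq> \<infinity>"
  shows "next_time X t (\<lambda>y. y \<in> set_tree d) < next_time X t (\<lambda>y. y \<in> set_tree c)"
proof -
  have leaves: "set X \<subseteq> leaf_keys T" using assms(2) by (simp add: strongly_stable_def)
  have "l = Leaf \<longleftrightarrow> r = Leaf"
    using assms(2,3) unfolding strongly_stable_def full_tree_def by blast
  moreover have "c \<noteq> Leaf" using assms(5) by auto
  ultimately have "l \<noteq> Leaf" using assms(4) by blast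
  have "set_tree l \<inter> set_tree r = {}"
    using bst_subtrees[OF assms(1,3)] by (rule bst_children_disjoint)
  then have "successively (\<lambda>y z. \<not> (y \<in> set_tree c \<and> z \<in> set_tree c)) (sub_seq (Node l a r) X)"
    using strongly_stable_alternates[OF assms(1,2,3) \<open>l \<noteq> Leaf\<close>] assms(4)
    unfolding distinct_adj_def successively_map
    by (elim successively_mono) blast
  moreover have "y \<in> set_tree c \<or> y \<in> set_tree d" if "y \<in> set X" "y \<in> set_tree (Node l a r)" for y
  proof -
    have "y \<in> set (sub_seq (Node l a r) X)" using that by (simp add: sub_seq_def)
    then show ?thesis
      using sub_seq_in_children[OF assms(1) leaves assms(3) \<open>l \<noteq> Leaf\<close>] assms(4) by blast
  qed
  ultimately show ?thesis
    using assms(4-6) unfolding sub_seq_def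
    by (intro next_time_alternation[where P = "\<lambda>y. y \<in> set_tree (Node l a r)"]) auto
qed

lemma next_window_time_le:
  assumes "bst T" "strongly_stable T X" "t < length X"
    and "Node l a r \<in> subtrees T" "c \<in> {l, r}" "X ! t \<in> set_tree c" "u \<in> set (search_path c (X ! t))"
  shows "next_time X t (in_window (search_path T (X ! t)) a)
           \<le> next_time X t (in_window (search_path T (X ! t)) u)"
proof -
  define p where "p = search_path T (X ! t)"
  define d where "d = (if c = l then r else l)"
  have cd: "c = l \<and> d = r \<or> c = r \<and> d = l" using assms(5) by (auto simp: d_def)
  have tau_a: "next_time X t (in_window p a) \<le> next_time X t (\<lambda>y. y \<in> set_tree d)"
  proof (rule next_time_mono)
    fix s assume "X ! s \<in> set_tree d"
    then show "in_window p a (X ! s)"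
      unfolding p_def using in_window_opposite_child[OF assms(1,4)] cd assms(6) by blast
  qed
  have tau_u: "next_time X t (\<lambda>y. y \<in> set_tree c) \<le> next_time X t (in_window p u)"
  proof (rule next_time_mono)
    fix s assume "s < length X" "in_window p u (X ! s)"
    moreover have "X ! s \<in> set_tree T"
      using \<open>s < length X\<close> assms(2) leaf_keys_subset[of T] by (force simp: strongly_stable_def)
    ultimately show "X ! s \<in> set_tree c"
      unfolding p_def
      using in_window_subset_subtree[OF assms(1) child_in_subtrees[OF assms(4,5)] assms(6,7)] by blast
  qed
  show ?thesis
  proof (cases "next_time X t (\<lambda>y. y \<in> set_tree c) = \<infinity>")
    case True
    then show ?thesis using tau_u unfolding p_def by simp
  next
    case False
    then have "next_time X t (\<lambda>y. y \<in> set_tree d) < next_time X t (\<lambda>y. y \<in> set_tree c)"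
      using next_time_other_child_less[OF assms(1,2,4) cd assms(6)] by blast
    with tau_a tau_u show ?thesis unfolding p_def by (meson less_imp_le order_trans)
  qed
qed

lemma gf_step_strongly_stable:
  assumes "bst T" "strongly_stable T X" "t < length X"
  shows "gf_step X t T = T"
proof -
  define x where "x = X ! t"
  define tau where "tau v = next_time X t (in_window (search_path T x) v)" for v
  have "x \<in> set_tree T"
    using assms(2,3) leaf_keys_subset[of T] unfolding x_def strongly_stable_def by force
  then have "sorted_wrt (\<lambda>u v. tau u \<le> tau v) (search_path T x)"
    using next_window_time_le[OF assms] unfolding tau_def x_def
    by (intro sorted_wrt_search_pathI[OF assms(1)])
  moreover have "sorted_wrt (\<lambda>u v. depth T u < depth T v) (search_path T x)"
    using assms(1) by (rule sorted_wrt_depth_search_path)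
  ultimately have "sorted_wrt (\<lambda>u v. tau u \<le> tau v \<and> depth T u < depth T v) (search_path T x)"
    by (rule sorted_wrt_conj)
  then have "sorted_wrt (\<lambda>u v. (tau u, depth T u) < (tau v, depth T v)) (search_path T x)"
    by (rule sorted_wrt_mono_rel[rotated]) (auto simp: less_prod_def le_less)
  then have "gf_build (\<lambda>v. (tau v, depth T v)) (sort (search_path T x)) (hanging T x) = T"
    by (rule gf_build_search_path[OF assms(1)])
  then show ?thesis
    unfolding gf_step_def tau_def x_def in_window_def[abs_def] Let_def .
qed

lemma gf_tree_strongly_stable:
  "bst T \<Longrightarrow> strongly_stable T X \<Longrightarrow> t \<le> length X \<Longrightarrow> gf_tree X T t = T"
  by (induction t) (auto simp: gf_step_strongly_stable)

lemma gf_cost_strongly_stable: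
  assumes "bst T" "strongly_stable T X"
  shows "gf_cost X T = (\<Sum>x\<in>leaf_keys T. count_list X x * (depth T x + 1))"
proof -
  have leaves: "set X \<subseteq> leaf_keys T" using assms(2) by (simp add: strongly_stable_def)
  have "gf_cost X T = (\<Sum>t<length X. depth T (X ! t) + 1)"
    unfolding gf_cost_def
  proof (rule sum.cong[OF refl])
    fix t assume "t \<in> {..<length X}"
    moreover from this have "X ! t \<in> set_tree T" using leaves leaf_keys_subset[of T] by force
    ultimately show "length (search_path (gf_tree X T t) (X ! t)) = depth T (X ! t) + 1"
      using gf_tree_strongly_stable[OF assms] search_path_ne[of "X ! t" T] by (simp add: depth_def)
  qed
  also have "\<dots> = sum_list (map (\<lambda>x. depth T x + 1) X)"
    by (simp add: sum_list_sum_nth atLeast0LessThan)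
  also have "\<dots> = (\<Sum>x\<in>set X. count_list X x * (depth T x + 1))"
    by (rule sum_list_map_eq_sum_count)
  also have "\<dots> = (\<Sum>x\<in>leaf_keys T. count_list X x * (depth T x + 1))"
    using leaves finite_subset[OF leaf_keys_subset finite_set_tree]
    by (intro sum.mono_neutral_left) auto
  finally show ?thesis .
qed

section \<open>Query frequencies of the leaves\<close>

lemma count_list_True_eq_False:
  assumes "distinct_adj (bs @ bs)"
  shows "count_list bs True = count_list bs False"
proof -
  have "count_list bs True = count_list bs False"
    if "distinct_adj bs" "bs \<noteq> [] \<Longrightarrow> last bs \<noteq> hd bs" for bs
    using that
  proof (induction bs rule: induct_list012)
    case (3 x y zs)
    then have "y = (\<not> x)" "zs \<noteq> [] \<Longrightarrow> hd zs = x \<and> last zs \<noteq> hd zs"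
      by (auto simp: distinct_adj_Cons)
    with 3 show ?case by (auto simp: distinct_adj_Cons)
  qed simp_all
  then show ?thesis using assms by (auto simp: distinct_adj_append_iff)
qed

lemma filter_sub_seq:
  "set_tree c \<subseteq> set_tree v \<Longrightarrow>
   filter (\<lambda>y. y \<in> set_tree c) (sub_seq v B) = filter (\<lambda>y. y \<in> set_tree c) B"
  unfolding sub_seq_def filter_filter by (rule filter_cong) auto

lemma count_list_sub_seq: "x \<in> set_tree v \<Longrightarrow> count_list (sub_seq v B) x = count_list B x"
  by (induction B) (auto simp: sub_seq_def)

definition balanced_queries :: "'a tree \<Rightarrow> 'a list \<Rightarrow> bool" where
  "balanced_queries T B \<longleftrightarrow> (\<forall>l a r. Node l a r \<in> subtrees T \<longrightarrow>
     length (filter (\<lambda>y. y \<in> set_tree l) B) = length (filter (\<lambda>y. y \<in> set_tree r) B))"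

lemma balanced_queries_if_strongly_stable_append_self:
  assumes "bst T" "strongly_stable T (B @ B)"
  shows "balanced_queries T B"
  unfolding balanced_queries_def
proof (intro allI impI)
  fix l a r assume node: "Node l a r \<in> subtrees T"
  show "length (filter (\<lambda>y. y \<in> set_tree l) B) = length (filter (\<lambda>y. y \<in> set_tree r) B)"
  proof (cases "l = Leaf")
    case True
    then have "r = Leaf" using assms(2) node by (auto simp: strongly_stable_def full_tree_def)
    with True show ?thesis by simp
  next
    case False
    define Bv where "Bv = sub_seq (Node l a r) B"
    have "set B \<subseteq> leaf_keys T" using assms(2) by (simp add: strongly_stable_def)
    then have side: "y \<in> set_tree r \<longleftrightarrow> y \<notin> set_tree l" if "y \<in> set Bv" for y
      using sub_seq_in_children[OF assms(1) _ node False] that unfolding Bv_def by blast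
    have "distinct_adj (map (\<lambda>y. y \<in> set_tree l) Bv @ map (\<lambda>y. y \<in> set_tree l) Bv)"
      using strongly_stable_alternates[OF assms(1,2) node False] by (simp add: Bv_def sub_seq_def)
    then have "length (filter (\<lambda>y. y \<in> set_tree l) Bv) = length (filter (\<lambda>y. y \<notin> set_tree l) Bv)"
      by (auto dest!: count_list_True_eq_False simp: count_list_eq_length_filter filter_map comp_def)
    also have "filter (\<lambda>y. y \<notin> set_tree l) Bv = filter (\<lambda>y. y \<in> set_tree r) Bv"
      using side by (auto intro: filter_cong)
    finally have "length (filter (\<lambda>y. y \<in> set_tree l) Bv) = length (filter (\<lambda>y. y \<in> set_tree r) Bv)" .
    moreover have "set_tree l \<subseteq> set_tree (Node l a r)" "set_tree r \<subseteq> set_tree (Node l a r)"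
      by auto
    ultimately show ?thesis
      unfolding Bv_def by (simp only: filter_sub_seq)
  qed
qed

lemma balanced_queries_sub_seq_child:
  assumes "balanced_queries (Node l a r) B" "c \<in> {l, r}"
  shows "balanced_queries c (sub_seq c B)"
  unfolding balanced_queries_def
proof (intro allI impI)
  fix l' a' r' assume sub: "Node l' a' r' \<in> subtrees c"
  then have "set_tree l' \<subseteq> set_tree c" "set_tree r' \<subseteq> set_tree c"
    using set_tree_subtrees[OF sub] by auto
  moreover have "Node l' a' r' \<in> subtrees (Node l a r)" using sub assms(2) by auto
  then have "length (filter (\<lambda>y. y \<in> set_tree l') B) = length (filter (\<lambda>y. y \<in> set_tree r') B)"
    using assms(1) unfolding balanced_queries_def by blast
  ultimately show "length (filter (\<lambda>y. y \<in> set_tree l') (sub_seq c B)) =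
                   length (filter (\<lambda>y. y \<in> set_tree r') (sub_seq c B))"
    by (simp add: filter_sub_seq)
qed

lemma length_sub_seq_child:
  assumes "bst (Node l a r)" "balanced_queries (Node l a r) B"
    and "set B \<subseteq> set_tree l \<union> set_tree r" "c \<in> {l, r}"
  shows "length B = 2 * length (sub_seq c B)"
proof -
  have "filter (\<lambda>y. y \<notin> set_tree l) B = filter (\<lambda>y. y \<in> set_tree r) B"
    using assms(3) bst_children_disjoint[OF assms(1)] by (intro filter_cong refl) blast
  then have "length B = length (filter (\<lambda>y. y \<in> set_tree l) B) + length (filter (\<lambda>y. y \<in> set_tree r) B)"
    using sum_length_filter_compl[of "\<lambda>y. y \<in> set_tree l" B] by simp
  moreover have "length (filter (\<lambda>y. y \<in> set_tree l) B) = length (filter (\<lambda>y. y \<in> set_tree r) B)"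
    using assms(2) unfolding balanced_queries_def by simp
  ultimately show ?thesis
    using assms(4) unfolding sub_seq_def by auto
qed

text \<open>Each step down the tree halves the share of the queries.\<close>
lemma count_list_mult_pow_depth:
  assumes "bst T" "balanced_queries T B" "set B \<subseteq> leaf_keys T" "x \<in> leaf_keys T"
  shows "count_list B x * 2 ^ depth T x = length B"
  using assms
proof (induction T arbitrary: B)
  case (Node l a r)
  show ?case
  proof (cases "l = Leaf \<and> r = Leaf")
    case True
    then have "x = a" "set B \<subseteq> {a}" using Node.prems(3,4) by (auto simp: leaf_keys_singleton)
    then show ?thesis by (simp add: depth_root count_list_eq_length_filter filter_id_conv subset_eq)
  next
    case False
    then have leaves: "leaf_keys (Node l a r) = leaf_keys l \<union> leaf_keys r"
      by (rule leaf_keys_Node)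
    then obtain c where c: "c \<in> {l, r}" "x \<in> leaf_keys c" using Node.prems(4) by blast
    have B: "set B \<subseteq> leaf_keys l \<union> leaf_keys r" using Node.prems(3) leaves by simp
    then have "set B \<subseteq> set_tree l \<union> set_tree r"
      using leaf_keys_subset[of l] leaf_keys_subset[of r] by blast
    with Node.prems(1,2) c(1) have len: "length B = 2 * length (sub_seq c B)"
      by (intro length_sub_seq_child)
    have "balanced_queries c (sub_seq c B)"
      using Node.prems(2) c(1) by (rule balanced_queries_sub_seq_child)
    moreover have "set (sub_seq c B) \<subseteq> leaf_keys c"
      using B c(1) bst_children_disjoint[OF Node.prems(1)] leaf_keys_subset[of l] leaf_keys_subset[of r]
      by (auto simp: sub_seq_def)
    moreover have "bst c" using Node.prems(1) c(1) by auto
    ultimately have "count_list (sub_seq c B) x * 2 ^ depth c x = length (sub_seq c B)"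
      using Node.IH c by auto
    moreover have "x \<in> set_tree c" using c(2) leaf_keys_subset[of c] by blast
    moreover have "depth (Node l a r) x = Suc (depth c x)"
      using Node.prems(1) c(1) \<open>x \<in> set_tree c\<close> by (rule depth_Node_child)
    ultimately show ?thesis
      using len by (simp add: count_list_sub_seq)
  qed
qed (simp add: leaf_keys_def)

theorem corollary2:
  fixes T :: "nat tree" and X A :: "nat list" and n k :: nat and s :: "nat \<Rightarrow> bool"
  assumes "bst T" and "set_tree T = {1..n}" and "full_tree T"
    and "strongly_stable T X"
    and "conforms T s X" and "atomic_seq T s A"
    and "k \<ge> 1" and "X = concat (replicate k A)"
  shows "gf_avg_cost X T = (\<Sum>x\<in>leaf_keys T. real (depth T x + 1) / 2 ^ depth T x)"
proof -
  have "X @ X = concat (replicate (k + k) A)"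
    using assms(8) by (simp add: replicate_add)
  then have "strongly_stable T (X @ X)"
    using assms(6,7) by (simp add: atomic_seq_def conforms_def)
  then have balanced: "balanced_queries T X"
    by (rule balanced_queries_if_strongly_stable_append_self[OF assms(1)])
  have leaves: "set X \<subseteq> leaf_keys T" using assms(4) by (simp add: strongly_stable_def)
  have "X \<noteq> []" using assms(6-8) by (auto simp: atomic_seq_def)
  have count: "real (count_list X x) = real (length X) / 2 ^ depth T x" if "x \<in> leaf_keys T" for x
    using arg_cong[where f = real, OF count_list_mult_pow_depth[OF assms(1) balanced leaves that]]
    by (simp add: eq_divide_eq)
  have "gf_avg_cost X T =
      (\<Sum>x\<in>leaf_keys T. real (count_list X x) * real (depth T x + 1)) / real (length X)"
    unfolding gf_avg_cost_def gf_cost_strongly_stable[OF assms(1,4)]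
    by (simp only: of_nat_sum of_nat_mult)
  also have "\<dots> = (\<Sum>x\<in>leaf_keys T. real (depth T x + 1) / 2 ^ depth T x)"
    using \<open>X \<noteq> []\<close> by (simp add: count sum_divide_distrib)
  finally show ?thesis .
qed

end
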